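(* Let $\mathcal{G}=(V,E)$ be an unweighted simple directed graph and let $\phi_1,\dots,\phi_l$ be spanning converging forests sampled independently and uniformly at random from the set $\mathcal{F}$ of all spanning converging forests of $\mathcal{G}$. For nodes $i,j$ define the estimator $$\overline{\omega}_{ij}=\begin{cases}\dfrac{1}{l}\displaystyle\sum_{t=1}^{l}\frac{1}{2+d_j}\Big(\widehat{\omega}_{ij}(\phi_t)+\sum_{k\in N^-_j}\widehat{\omega}_{ik}(\phi_t)\Big), & i\neq j,\\[3mm] \dfrac{1}{l}\displaystyle\sum_{t=1}^{l}\frac{1}{1+d_i}\Big(1+\sum_{k\in N^-_i}\widehat{\omega}_{ik}(\phi_t)\Big), & i=j.\end{cases}$$ (1) For any pair of nodes $i\neq j$ and parameters $\epsilon,\delta\in(0,1)$, if $l=\left\lceil \frac{1}{(2+d_j)^2}\left(\frac{1}{2\epsilon^2}+\frac{2}{3\epsilon}\right)\log\frac{2}{\delta}\right\rceil$, then with probability at least $1-\delta$, $$\omega_{ij}-\epsilon\le\overline{\omega}_{ij}\le\omega_{ij}+\epsilon.$$ (2) For $i=j$ and parameters $\epsilon,\delta\in(0,1)$, if $l=\left\lceil\left(\frac{2}{3\epsilon}+\frac{1}{4\epsilon^2}\right)\log\frac{2}{\delta}\right\rceil$, then with probability at least $1-\delta$, $$(1-\epsilon)\,\omega_{ii}\le\overline{\omega}_{ii}\le(1+\epsilon)\,\omega_{ii}.$$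
   Context: $\mathcal{G}=(V,E)$ has $n$ nodes; $a_{ij}=1$ if $(i,j)\in E$ and $0$ otherwise. $d_i=\sum_j a_{ij}$ is the out-degree of $i$, $\mathbf{D}=\mathrm{diag}(d_1,\dots,d_n)$, $\mathbf{L}=\mathbf{D}-\mathbf{A}$, and the forest matrix is $\mathbf{\Omega}=(\mathbf{I}+\mathbf{L})^{-1}=(\omega_{ij})$. $N^-_j=\{k:(k,j)\in E\}$ is the set of in-neighbors of $j$. A rooted converging tree is a weakly connected digraph without cycles in which one node (the root) has out-degree $0$ and every other node has out-degree $1$ (an isolated node is such a tree rooted at itself). A spanning converging forest of $\mathcal{G}$ is a spanning subgraph (all of $V$, a subset of $E$) whose weakly connected components are rooted converging trees; $r_\phi(i)$ is the root of the tree of $\phi$ containing $i$. $\widehat{\omega}_{ij}(\phi)=\mathbb{I}_{\{r_\phi(i)=j\}}$ equals 1 if $r_\phi(i)=j$ and 0 otherwise. (The estimator $\overline{\omega}_{ij}$ is the output of the paper's algorithm SFQPlus on the sampled forests.) *)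

theory Defs
  imports "HOL-Probability.Probability"
begin

definition outdeg :: "('n \<times> 'n) set \<Rightarrow> 'n \<Rightarrow> nat" where
  "outdeg E i = card {j. (i, j) \<in> E}"

definition in_nbrs :: "('n \<times> 'n) set \<Rightarrow> 'n \<Rightarrow> 'n set" where
  "in_nbrs E j = {k. (k, j) \<in> E}"

definition laplacian :: "('n::finite \<times> 'n) set \<Rightarrow> real^'n^'n" where
  "laplacian E = (\<chi> i j. (if i = j then real (outdeg E i) else 0) - (if (i, j) \<in> E then 1 else 0))"

definition forest_matrix :: "('n::finite \<times> 'n) set \<Rightarrow> real^'n^'n" where
  "forest_matrix E = matrix_inv (mat 1 + laplacian E)"

definition weak_comp :: "('n \<times> 'n) set \<Rightarrow> 'n \<Rightarrow> 'n set" where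
  "weak_comp F i = {v. (i, v) \<in> (F \<union> F\<inverse>)\<^sup>*}"

definition rooted_conv_tree :: "'n set \<Rightarrow> ('n \<times> 'n) set \<Rightarrow> bool" where
  "rooted_conv_tree C T \<longleftrightarrow>
     T \<subseteq> C \<times> C \<and> C \<noteq> {} \<and>
     (\<forall>u\<in>C. \<forall>v\<in>C. (u, v) \<in> (T \<union> T\<inverse>)\<^sup>*) \<and>
     acyclic T \<and>
     (\<exists>r\<in>C. (\<forall>v. (r, v) \<notin> T) \<and> (\<forall>u\<in>C - {r}. \<exists>!v. (u, v) \<in> T))"

definition spanning_conv_forest :: "('n \<times> 'n) set \<Rightarrow> ('n \<times> 'n) set \<Rightarrow> bool" where
  "spanning_conv_forest E F \<longleftrightarrow> F \<subseteq> E \<and>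
     (\<forall>i. rooted_conv_tree (weak_comp F i) (F \<inter> (weak_comp F i \<times> weak_comp F i)))"

definition conv_forests :: "('n \<times> 'n) set \<Rightarrow> ('n \<times> 'n) set set" where
  "conv_forests E = {F. spanning_conv_forest E F}"

definition root_of :: "('n \<times> 'n) set \<Rightarrow> 'n \<Rightarrow> 'n" where
  "root_of F i = (THE r. r \<in> weak_comp F i \<and> (\<forall>v. (r, v) \<notin> F))"

definition omega_hat :: "('n \<times> 'n) set \<Rightarrow> 'n \<Rightarrow> 'n \<Rightarrow> real" where
  "omega_hat F i j = (if root_of F i = j then 1 else 0)"

definition omega_bar :: "('n \<times> 'n) set \<Rightarrow> nat \<Rightarrow> (nat \<Rightarrow> ('n \<times> 'n) set) \<Rightarrow> 'n \<Rightarrow> 'n \<Rightarrow> real" where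
  "omega_bar E l phis i j =
     (if i \<noteq> j then
        (1 / real l) * (\<Sum>t<l. (1 / (2 + real (outdeg E j))) *
            (omega_hat (phis t) i j + (\<Sum>k\<in>in_nbrs E j. omega_hat (phis t) i k)))
      else
        (1 / real l) * (\<Sum>t<l. (1 / (1 + real (outdeg E i))) *
            (1 + (\<Sum>k\<in>in_nbrs E i. omega_hat (phis t) i k))))"

definition forest_samples :: "('n \<times> 'n) set \<Rightarrow> nat \<Rightarrow> (nat \<Rightarrow> ('n \<times> 'n) set) pmf" where
  "forest_samples E l = Pi_pmf {..<l} {} (\<lambda>_. pmf_of_set (conv_forests E))"

end

theory Submission
  imports Defs
begin

text \<open>
  By the matrix-forest theorem, \<open>\<omega>(i, j)\<close> is the probability that \<open>i\<close> lies in the tree rooted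
  at \<open>j\<close> of a uniformly random spanning converging forest.  We prove \<open>(I + L) \<Omega> = I\<close> for the
  matrix of these probabilities by cutting the out-edge of \<open>i\<close>, which groups the forests into
  fibres on each of which row \<open>i\<close> of the identity balances.  Read as \<open>\<Omega> (I + L) = I\<close>, it says
  \<open>(2 + d j) \<omega>(i, j) = \<omega>(i, j) + (\<Sum>k \<in> N\<^sup>-(j). \<omega>(i, k)) + [i = j]\<close>, so every summand of the
  estimator is an unbiased sample of \<open>\<omega>(i, j)\<close>.  For \<open>i \<noteq> j\<close> the summand lies in
  \<open>[0, 1 / (2 + d j)]\<close> and Hoeffding's inequality gives the additive bound.  For \<open>i = j\<close> it is
  \<open>(1 + B) / (1 + d i)\<close> with \<open>B\<close> a Bernoulli variable of mean \<open>q = (1 + d i) \<omega>(i, i) - 1\<close>, and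
  Bernstein's inequality with variance \<open>q (1 - q)\<close> gives the relative bound.
\<close>

section \<open>Spanning converging forests as functional acyclic subgraphs\<close>

lemma rtrancl_Int_closed:
  assumes "R `` C \<subseteq> C" "u \<in> C" "(u, v) \<in> R\<^sup>*"
  shows "v \<in> C \<and> (u, v) \<in> (R \<inter> C \<times> C)\<^sup>*"
  using assms(3) by induction (use assms(1,2) in \<open>auto intro: rtrancl_into_rtrancl\<close>)

lemma trancl_Int_closed:
  assumes "R `` C \<subseteq> C" "u \<in> C" "(u, v) \<in> R\<^sup>+"
  shows "(u, v) \<in> (R \<inter> C \<times> C)\<^sup>+"
proof -
  obtain w where "(u, w) \<in> R\<^sup>*" "(w, v) \<in> R" using assms(3) by (blast dest: tranclD2)
  with rtrancl_Int_closed[OF assms(1,2)] assms(1) show ?thesis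
    by (blast intro: rtrancl_into_trancl1)
qed

lemma weak_comp_closed: "(F \<union> F\<inverse>) `` weak_comp F i \<subseteq> weak_comp F i"
  unfolding weak_comp_def by (auto intro: rtrancl_into_rtrancl)

lemma weak_comp_sym: "(u, v) \<in> (F \<union> F\<inverse>)\<^sup>* \<Longrightarrow> (v, u) \<in> (F \<union> F\<inverse>)\<^sup>*"
  by (metis converse_Un converse_converse rtrancl_converseI sup_commute)

lemma sink_rtrancl_eq: "s \<notin> Domain F \<Longrightarrow> (s, v) \<in> F\<^sup>* \<Longrightarrow> v = s"
  by (auto elim: converse_rtranclE)

lemma weak_path_reaches_sink:
  assumes "single_valued F" "(u, v) \<in> (F \<union> F\<inverse>)\<^sup>*" "(u, s) \<in> F\<^sup>*" "s \<notin> Domain F"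
  shows "(v, s) \<in> F\<^sup>*"
  using assms(2)
proof induction
  case (step v w)
  show ?case
  proof (cases "(v, w) \<in> F")
    case True
    then have "v \<noteq> s" using assms(4) by blast
    then obtain w' where "(v, w') \<in> F" "(w', s) \<in> F\<^sup>*"
      using step.IH by (blast elim: converse_rtranclE)
    then show ?thesis using True assms(1) by (auto dest: single_valuedD)
  next
    case False
    then show ?thesis using step by (blast intro: converse_rtrancl_into_rtrancl)
  qed
qed (use assms(3) in simp)

lemma sink_reachable:
  fixes F :: "('n::finite \<times> 'n) set"
  assumes "acyclic F"
  shows "\<exists>s. (k, s) \<in> F\<^sup>* \<and> s \<notin> Domain F"
proof -
  have "wf (F\<inverse>)" using assms by (simp add: finite_acyclic_wf_converse)
  then show ?thesis
  proof (induction k rule: wf_induct_rule)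
    case (less k)
    show ?case
    proof (cases "k \<in> Domain F")
      case True
      then obtain k' where "(k, k') \<in> F" by blast
      with less show ?thesis by (blast intro: converse_rtrancl_into_rtrancl)
    qed blast
  qed
qed

lemma root_of_eqI:
  assumes "single_valued F" "(k, s) \<in> F\<^sup>*" "s \<notin> Domain F"
  shows "root_of F k = s"
  unfolding root_of_def
proof (rule the_equality)
  have "(k, s) \<in> (F \<union> F\<inverse>)\<^sup>*" using assms(2) by (blast intro: in_rtrancl_UnI)
  then show "s \<in> weak_comp F k \<and> (\<forall>v. (s, v) \<notin> F)"
    using assms(3) unfolding weak_comp_def by blast
next
  fix r assume "r \<in> weak_comp F k \<and> (\<forall>v. (r, v) \<notin> F)"
  then have "(k, r) \<in> (F \<union> F\<inverse>)\<^sup>*" "r \<notin> Domain F" unfolding weak_comp_def by auto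
  have "(r, s) \<in> F\<^sup>*" by (rule weak_path_reaches_sink[OF assms(1) \<open>(k, r) \<in> _\<close> assms(2,3)])
  then show "r = s" using sink_rtrancl_eq[OF \<open>r \<notin> Domain F\<close>] by metis
qed

lemma root_of_reachable:
  fixes F :: "('n::finite \<times> 'n) set"
  assumes "single_valued F" "acyclic F"
  shows "(k, root_of F k) \<in> F\<^sup>*" "root_of F k \<notin> Domain F"
proof -
  obtain s where "(k, s) \<in> F\<^sup>*" "s \<notin> Domain F" using sink_reachable[OF assms(2)] by blast
  with root_of_eqI[OF assms(1) this] show "(k, root_of F k) \<in> F\<^sup>*" "root_of F k \<notin> Domain F" by simp_all
qed

lemma weak_comp_connected:
  assumes "u \<in> weak_comp F i" "v \<in> weak_comp F i"
  defines "T \<equiv> F \<inter> weak_comp F i \<times> weak_comp F i"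
  shows "(u, v) \<in> (T \<union> T\<inverse>)\<^sup>*"
proof -
  have "(u, v) \<in> (F \<union> F\<inverse>)\<^sup>*"
    using assms(1,2) unfolding weak_comp_def by (blast intro: weak_comp_sym rtrancl_trans)
  then have "(u, v) \<in> ((F \<union> F\<inverse>) \<inter> weak_comp F i \<times> weak_comp F i)\<^sup>*"
    using rtrancl_Int_closed[OF weak_comp_closed assms(1)] by blast
  moreover have "(F \<union> F\<inverse>) \<inter> weak_comp F i \<times> weak_comp F i = T \<union> T\<inverse>" unfolding T_def by blast
  ultimately show ?thesis by simp
qed

lemma functional_acyclic_imp_spanning_conv_forest:
  fixes F :: "('n::finite \<times> 'n) set"
  assumes "F \<subseteq> E" "single_valued F" "acyclic F"
  shows "spanning_conv_forest E F"
  unfolding spanning_conv_forest_def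
proof (intro conjI allI)
  fix i
  define C where "C = weak_comp F i"
  define T where "T = F \<inter> C \<times> C"
  define r where "r = root_of F i"
  have closed: "(F \<union> F\<inverse>) `` C \<subseteq> C" unfolding C_def by (rule weak_comp_closed)
  have "i \<in> C" unfolding C_def weak_comp_def by simp
  have ir: "(i, r) \<in> F\<^sup>*" "r \<notin> Domain F" unfolding r_def using root_of_reachable[OF assms(2,3)] by auto
  have succ: "\<exists>!v. (u, v) \<in> T" if u: "u \<in> C - {r}" for u
  proof -
    have "(i, u) \<in> (F \<union> F\<inverse>)\<^sup>*" using u unfolding C_def weak_comp_def by simp
    then have "(u, r) \<in> F\<^sup>*" using weak_path_reaches_sink[OF assms(2) _ ir] by blast
    then obtain v where "(u, v) \<in> F" using u by (blast elim: converse_rtranclE)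
    moreover have "v \<in> C" using calculation closed u by blast
    ultimately show ?thesis using u assms(2) unfolding T_def by (auto dest: single_valuedD)
  qed
  have "r \<in> C" using rtrancl_Int_closed[OF _ \<open>i \<in> C\<close> ir(1)] closed by blast
  have "rooted_conv_tree C T"
    unfolding rooted_conv_tree_def
  proof (intro conjI)
    show "acyclic T" unfolding T_def by (rule acyclic_subset[OF assms(3)]) blast
    show "\<exists>r\<in>C. (\<forall>v. (r, v) \<notin> T) \<and> (\<forall>u\<in>C - {r}. \<exists>!v. (u, v) \<in> T)"
      using \<open>r \<in> C\<close> ir(2) succ unfolding T_def by blast
    show "T \<subseteq> C \<times> C" unfolding T_def by blast
    show "C \<noteq> {}" using \<open>i \<in> C\<close> by blast
    show "\<forall>u\<in>C. \<forall>v\<in>C. (u, v) \<in> (T \<union> T\<inverse>)\<^sup>*"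
      unfolding C_def T_def by (intro ballI weak_comp_connected)
  qed
  then show "rooted_conv_tree (weak_comp F i) (F \<inter> weak_comp F i \<times> weak_comp F i)"
    unfolding C_def T_def .
qed (use assms(1) in blast)

lemma spanning_conv_forest_imp_functional_acyclic:
  assumes "spanning_conv_forest E F"
  shows "F \<subseteq> E" "single_valued F" "acyclic F"
proof -
  have tree: "rooted_conv_tree (weak_comp F i) (F \<inter> weak_comp F i \<times> weak_comp F i)" for i
    using assms unfolding spanning_conv_forest_def by blast
  have closed: "F `` weak_comp F i \<subseteq> weak_comp F i" for i
    using weak_comp_closed[of F i] by blast
  have self: "i \<in> weak_comp F i" for i unfolding weak_comp_def by simp
  show "F \<subseteq> E" using assms unfolding spanning_conv_forest_def by blast
  show "single_valued F"
  proof (rule single_valuedI)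
    fix u v w assume "(u, v) \<in> F" "(u, w) \<in> F"
    define C where "C = weak_comp F u"
    define T where "T = F \<inter> C \<times> C"
    have uvw: "(u, v) \<in> T" "(u, w) \<in> T"
      using \<open>(u, v) \<in> F\<close> \<open>(u, w) \<in> F\<close> closed[of u] self[of u] unfolding T_def C_def by blast+
    obtain r where "\<forall>v. (r, v) \<notin> T" "\<forall>x \<in> C - {r}. \<exists>!y. (x, y) \<in> T"
      using tree[of u] unfolding rooted_conv_tree_def C_def[symmetric] T_def[symmetric] by blast
    moreover have "u \<in> C - {r}" using uvw calculation(1) self[of u] unfolding C_def by blast
    ultimately show "v = w" using uvw by blast
  qed
  show "acyclic F"
    unfolding acyclic_def
  proof
    fix x
    have "acyclic (F \<inter> weak_comp F x \<times> weak_comp F x)"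
      using tree[of x] by (simp add: rooted_conv_tree_def)
    then show "(x, x) \<notin> F\<^sup>+"
      using trancl_Int_closed[OF closed self, of x x] unfolding acyclic_def by blast
  qed
qed

lemma conv_forests_eq:
  "conv_forests (E :: ('n::finite \<times> 'n) set) = {F. F \<subseteq> E \<and> single_valued F \<and> acyclic F}"
proof (rule set_eqI)
  fix F
  show "F \<in> conv_forests E \<longleftrightarrow> F \<in> {F. F \<subseteq> E \<and> single_valued F \<and> acyclic F}"
    using functional_acyclic_imp_spanning_conv_forest[of F E]
      spanning_conv_forest_imp_functional_acyclic[of E F]
    unfolding conv_forests_def mem_Collect_eq by blast
qed

lemma empty_in_conv_forests: "{} \<in> conv_forests (E :: ('n::finite \<times> 'n) set)"
  by (simp add: conv_forests_eq single_valued_def acyclic_def)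

section \<open>The matrix-forest theorem\<close>

lemma single_valued_insert_sink:
  "single_valued G \<Longrightarrow> i \<notin> Domain G \<Longrightarrow> single_valued (insert (i, x) G)"
  unfolding single_valued_def by blast

lemma root_of_cut:
  fixes F :: "('n::finite \<times> 'n) set"
  assumes "single_valued F" "acyclic F"
  shows "root_of F k =
    (if root_of (F - {i} \<times> UNIV) k = i then root_of F i else root_of (F - {i} \<times> UNIV) k)"
proof -
  define G where "G = F - {i} \<times> UNIV"
  have "G \<subseteq> F" unfolding G_def by blast
  then have "single_valued G" "acyclic G" "G\<^sup>* \<subseteq> F\<^sup>*"
    using assms single_valued_subset acyclic_subset rtrancl_mono by blast+
  note root_G = root_of_reachable[OF this(1,2), of k] and root_F = root_of_reachable[OF assms, of i]
  show ?thesis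
  proof (cases "root_of G k = i")
    case True
    then have "(k, root_of F i) \<in> F\<^sup>*"
      using root_G(1) root_F(1) \<open>G\<^sup>* \<subseteq> F\<^sup>*\<close> by (blast intro: rtrancl_trans)
    then have "root_of F k = root_of F i" by (rule root_of_eqI[OF assms(1) _ root_F(2)])
    then show ?thesis using True unfolding G_def by simp
  next
    case False
    then have "root_of G k \<notin> Domain F" using root_G(2) unfolding G_def by blast
    moreover have "(k, root_of G k) \<in> F\<^sup>*" using root_G(1) \<open>G\<^sup>* \<subseteq> F\<^sup>*\<close> by blast
    ultimately have "root_of F k = root_of G k" by (rule root_of_eqI[OF assms(1), rotated])
    then show ?thesis using False unfolding G_def by simp
  qed
qed

lemma insert_edge_in_conv_forests:
  fixes E :: "('n::finite \<times> 'n) set"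
  assumes "G \<in> conv_forests E" "i \<notin> Domain G" "(i, x) \<in> E" "root_of G x \<noteq> i"
  shows "insert (i, x) G \<in> conv_forests E"
proof -
  have G: "G \<subseteq> E" "single_valued G" "acyclic G" using assms(1) by (simp_all add: conv_forests_eq)
  have "(x, i) \<notin> G\<^sup>*" using root_of_eqI[OF G(2) _ assms(2)] assms(4) by blast
  then have "acyclic (insert (i, x) G)" using G(3) by simp
  moreover have "single_valued (insert (i, x) G)" by (rule single_valued_insert_sink[OF G(2) assms(2)])
  moreover have "insert (i, x) G \<subseteq> E" using G(1) assms(3) by blast
  ultimately show ?thesis unfolding conv_forests_eq by blast
qed

lemma root_of_insert_edge:
  fixes G :: "('n::finite \<times> 'n) set"
  assumes "single_valued G" "acyclic G" "i \<notin> Domain G" "root_of G x \<noteq> i"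
  shows "root_of (insert (i, x) G) i = root_of G x"
proof (rule root_of_eqI)
  show "single_valued (insert (i, x) G)" by (rule single_valued_insert_sink[OF assms(1,3)])
  have "(x, root_of G x) \<in> G\<^sup>*" "root_of G x \<notin> Domain G" using root_of_reachable[OF assms(1,2)] by auto
  moreover have "G\<^sup>* \<subseteq> (insert (i, x) G)\<^sup>*" by (rule rtrancl_mono) blast
  ultimately show "(i, root_of G x) \<in> (insert (i, x) G)\<^sup>*"
    by (blast intro: converse_rtrancl_into_rtrancl)
  show "root_of G x \<notin> Domain (insert (i, x) G)"
    using \<open>root_of G x \<notin> Domain G\<close> assms(4) by simp
qed

lemma root_of_cut_out_edge:
  fixes F :: "('n::finite \<times> 'n) set"
  assumes "single_valued F" "acyclic F" "(i, x) \<in> F"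
  shows "root_of (F - {i} \<times> UNIV) x \<noteq> i"
proof
  define G where "G = F - {i} \<times> UNIV"
  assume "root_of G x = i"
  moreover have "G \<subseteq> F" unfolding G_def by blast
  then have "single_valued G" "acyclic G" "G\<^sup>* \<subseteq> F\<^sup>*"
    using assms(1,2) single_valued_subset acyclic_subset rtrancl_mono by blast+
  ultimately have "(x, i) \<in> F\<^sup>*" using root_of_reachable by blast
  then have "(i, i) \<in> F\<^sup>+" using assms(3) by (blast intro: rtrancl_into_trancl2)
  then show False using assms(2) unfolding acyclic_def by blast
qed

lemma conv_forests_cut_fiber:
  fixes E :: "('n::finite \<times> 'n) set"
  assumes G: "G \<in> conv_forests E" "i \<notin> Domain G"
  shows "{F \<in> conv_forests E. F - {i} \<times> UNIV = G}
       = insert G ((\<lambda>x. insert (i, x) G) ` {x. (i, x) \<in> E \<and> root_of G x \<noteq> i})"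
proof (intro equalityI subsetI)
  fix F assume "F \<in> {F \<in> conv_forests E. F - {i} \<times> UNIV = G}"
  then have F: "F \<subseteq> E" "single_valued F" "acyclic F" and cut: "F - {i} \<times> UNIV = G"
    by (simp_all add: conv_forests_eq)
  show "F \<in> insert G ((\<lambda>x. insert (i, x) G) ` {x. (i, x) \<in> E \<and> root_of G x \<noteq> i})"
  proof (cases "i \<in> Domain F")
    case True
    then obtain x where x: "(i, x) \<in> F" by blast
    then have "F = insert (i, x) G" using cut F(2) unfolding single_valued_def by blast
    moreover have "root_of G x \<noteq> i" using root_of_cut_out_edge[OF F(2,3) x] cut by simp
    ultimately show ?thesis using x F(1) by blast
  next
    case False
    then show ?thesis using cut by blast
  qed
next
  fix F assume "F \<in> insert G ((\<lambda>x. insert (i, x) G) ` {x. (i, x) \<in> E \<and> root_of G x \<noteq> i})"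
  then consider "F = G" | x where "F = insert (i, x) G" "(i, x) \<in> E" "root_of G x \<noteq> i"
    by blast
  then show "F \<in> {F \<in> conv_forests E. F - {i} \<times> UNIV = G}"
  proof cases
    case 1
    then show ?thesis using G by blast
  next
    case (2 x)
    then show ?thesis using insert_edge_in_conv_forests[OF G] G(2) by blast
  qed
qed

lemma cut_fiber_size_and_roots:
  fixes E :: "('n::finite \<times> 'n) set"
  assumes G: "G \<in> conv_forests E" "i \<notin> Domain G"
  defines "\<Phi> \<equiv> {F \<in> conv_forests E. F - {i} \<times> UNIV = G}"
    and "X \<equiv> {x. (i, x) \<in> E \<and> root_of G x \<noteq> i}"
  shows "card \<Phi> = 1 + card X"
    "(\<Sum>F\<in>\<Phi>. of_bool (root_of F i = j)) = of_bool (i = j) + (\<Sum>x\<in>X. of_bool (root_of G x = j))"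
proof -
  have G_forest: "single_valued G" "acyclic G" using G(1) by (simp_all add: conv_forests_eq)
  have fiber: "\<Phi> = insert G ((\<lambda>x. insert (i, x) G) ` X)"
    unfolding \<Phi>_def X_def by (rule conv_forests_cut_fiber[OF G])
  have inj: "G \<notin> (\<lambda>x. insert (i, x) G) ` X" "inj_on (\<lambda>x. insert (i, x) G) X"
    using G(2) by (auto simp: inj_on_def)
  then show "card \<Phi> = 1 + card X" unfolding fiber by (simp add: card_image)
  have "root_of G i = i" using root_of_eqI[OF G_forest(1) _ G(2)] by blast
  moreover have "root_of (insert (i, x) G) i = root_of G x" if "x \<in> X" for x
    using root_of_insert_edge[OF G_forest G(2)] that by (simp add: X_def)
  ultimately show "(\<Sum>F\<in>\<Phi>. of_bool (root_of F i = j)) = of_bool (i = j) + (\<Sum>x\<in>X. of_bool (root_of G x = j))"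
    unfolding fiber using inj by (simp add: sum.reindex del: sum_of_bool_eq)
qed

text \<open>
  Cutting the out-edge of \<open>i\<close> maps every forest to one in which \<open>i\<close> is a root; on each fibre
  of this map the row-\<open>i\<close> identity of \<open>(I + L) \<Omega> = I\<close> already balances.
\<close>
lemma cut_fiber_root_count:
  fixes E :: "('n::finite \<times> 'n) set"
  assumes G: "G \<in> conv_forests E" "i \<notin> Domain G"
  defines "\<Phi> \<equiv> {F \<in> conv_forests E. F - {i} \<times> UNIV = G}"
  shows "(\<Sum>F\<in>\<Phi>. (1 + real (outdeg E i)) * of_bool (root_of F i = j)
            - (\<Sum>k | (i, k) \<in> E. of_bool (root_of F k = j)))
       = of_bool (i = j) * card \<Phi>"
proof -
  define Ain where "Ain = {k. (i, k) \<in> E \<and> root_of G k = i}"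
  define Aout where "Aout = {k. (i, k) \<in> E \<and> root_of G k \<noteq> i}"
  define S where "S = (\<Sum>k\<in>Aout. of_bool (root_of G k = j) :: real)"
  note fiber = cut_fiber_size_and_roots(1)[OF G, folded \<Phi>_def Aout_def]
    cut_fiber_size_and_roots(2)[OF G, of j, folded \<Phi>_def Aout_def]
  have "{k. (i, k) \<in> E} = Ain \<union> Aout" "Ain \<inter> Aout = {}" unfolding Ain_def Aout_def by auto
  then have card_A: "real (outdeg E i) = card Ain + card Aout"
    and split_A: "(\<Sum>k | (i, k) \<in> E. f k) = (\<Sum>k\<in>Ain. f k) + (\<Sum>k\<in>Aout. f k)" for f :: "'n \<Rightarrow> real"
    unfolding outdeg_def by (simp_all add: card_Un_disjoint sum.union_disjoint)
  have term_F: "(1 + real (outdeg E i)) * of_bool (root_of F i = j) - (\<Sum>k | (i, k) \<in> E. of_bool (root_of F k = j))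
      = (1 + real (card Aout)) * of_bool (root_of F i = j) - S" if "F \<in> \<Phi>" for F
  proof -
    have "single_valued F" "acyclic F" and cut: "F - {i} \<times> UNIV = G"
      using that by (auto simp: \<Phi>_def conv_forests_eq)
    note root_F = root_of_cut[OF this(1,2), of _ i, unfolded cut]
    have "root_of F k = root_of F i" if "k \<in> Ain" for k using root_F[of k] that by (simp add: Ain_def)
    then have "(\<Sum>k\<in>Ain. of_bool (root_of F k = j)) = real (card Ain) * of_bool (root_of F i = j)"
      by (simp del: sum_of_bool_eq)
    moreover have "(\<Sum>k\<in>Aout. of_bool (root_of F k = j)) = S"
      unfolding S_def using root_F by (intro sum.cong) (simp_all add: Aout_def)
    ultimately show ?thesis unfolding split_A card_A by (simp add: ring_distribs)
  qed
  have "(\<Sum>F\<in>\<Phi>. (1 + real (outdeg E i)) * of_bool (root_of F i = j)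
            - (\<Sum>k | (i, k) \<in> E. of_bool (root_of F k = j)))
      = (\<Sum>F\<in>\<Phi>. (1 + real (card Aout)) * of_bool (root_of F i = j) - S)"
    by (rule sum.cong[OF refl term_F])
  also have "\<dots> = (1 + real (card Aout)) * (of_bool (i = j) + S) - card \<Phi> * S"
    by (simp add: fiber(2) S_def sum_subtractf sum_distrib_left[symmetric] del: sum_of_bool_eq)
  finally show ?thesis unfolding fiber(1) by (simp add: ring_distribs)
qed

lemma root_count_identity:
  fixes E :: "('n::finite \<times> 'n) set"
  shows "(1 + real (outdeg E i)) * (\<Sum>F\<in>conv_forests E. of_bool (root_of F i = j))
       = of_bool (i = j) * card (conv_forests E)
         + (\<Sum>k | (i, k) \<in> E. \<Sum>F\<in>conv_forests E. of_bool (root_of F k = j))"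
proof -
  define h where "h F = (1 + real (outdeg E i)) * of_bool (root_of F i = j)
    - (\<Sum>k | (i, k) \<in> E. of_bool (root_of F k = j))" for F :: "('n \<times> 'n) set"
  define cut where "cut F = F - {i} \<times> UNIV" for F :: "('n \<times> 'n) set"
  have fin: "finite (conv_forests E)" by simp
  have "(\<Sum>F\<in>conv_forests E. h F)
      = (\<Sum>G\<in>cut ` conv_forests E. \<Sum>F\<in>{F \<in> conv_forests E. cut F = G}. h F)"
    by (rule sum.image_gen[OF fin])
  also have "\<dots> = (\<Sum>G\<in>cut ` conv_forests E. \<Sum>F\<in>{F \<in> conv_forests E. cut F = G}. of_bool (i = j))"
  proof (rule sum.cong[OF refl])
    fix G assume "G \<in> cut ` conv_forests E"
    then have "G \<in> conv_forests E" "i \<notin> Domain G"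
      by (auto simp: cut_def conv_forests_eq intro: single_valued_subset acyclic_subset)
    from cut_fiber_root_count[OF this, of j]
    show "(\<Sum>F\<in>{F \<in> conv_forests E. cut F = G}. h F) = (\<Sum>F\<in>{F \<in> conv_forests E. cut F = G}. of_bool (i = j))"
      by (simp add: h_def cut_def del: sum_of_bool_eq)
  qed
  also have "\<dots> = (\<Sum>F\<in>conv_forests E. of_bool (i = j))"
    by (rule sum.image_gen[OF fin, symmetric])
  finally have "(\<Sum>F\<in>conv_forests E. h F) = of_bool (i = j) * card (conv_forests E)"
    by simp
  moreover have "(\<Sum>F\<in>conv_forests E. h F)
      = (1 + real (outdeg E i)) * (\<Sum>F\<in>conv_forests E. of_bool (root_of F i = j))
        - (\<Sum>k | (i, k) \<in> E. \<Sum>F\<in>conv_forests E. of_bool (root_of F k = j))"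
    unfolding h_def sum_subtractf sum_distrib_left by (simp only: sum.swap[of _ "conv_forests E"])
  ultimately show ?thesis by simp
qed

lemma matrix_inv_eqI:
  fixes A B :: "'a::field^'n^'n"
  assumes "A ** B = mat 1"
  shows "matrix_inv A = B"
proof -
  have "B ** A = mat 1" using assms matrix_left_right_inverse by blast
  then have inv: "A ** matrix_inv A = mat 1" "matrix_inv A ** A = mat 1"
    using assms someI[of "\<lambda>A'. A ** A' = mat 1 \<and> A' ** A = mat 1" B] unfolding matrix_inv_def by blast+
  have "matrix_inv A = matrix_inv A ** (A ** B)" by (simp add: assms matrix_mul_rid)
  also have "\<dots> = B" by (simp add: matrix_mul_assoc inv matrix_mul_lid)
  finally show ?thesis .
qed

lemma laplacian_mult_nth:
  fixes M :: "real^'n^'n"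
  shows "((mat 1 + laplacian E) ** M) $ a $ b
       = (1 + real (outdeg E a)) * M $ a $ b - (\<Sum>k | (a, k) \<in> E. M $ k $ b)"
proof -
  have "((mat 1 + laplacian E) ** M) $ a $ b
      = (\<Sum>k\<in>UNIV. (if k = a then (1 + real (outdeg E a)) * M $ k $ b else 0)
                   - (if (a, k) \<in> E then M $ k $ b else 0))"
    unfolding matrix_matrix_mult_def laplacian_def mat_def by (auto intro!: sum.cong simp: algebra_simps)
  also have "\<dots> = (1 + real (outdeg E a)) * M $ a $ b - (\<Sum>k | (a, k) \<in> E. M $ k $ b)"
    by (simp add: sum_subtractf sum.If_cases)
  finally show ?thesis .
qed

lemma mult_laplacian_nth:
  fixes M :: "real^'n^'n"
  shows "(M ** (mat 1 + laplacian E)) $ a $ b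
       = (1 + real (outdeg E b)) * M $ a $ b - (\<Sum>k\<in>in_nbrs E b. M $ a $ k)"
proof -
  have "(M ** (mat 1 + laplacian E)) $ a $ b
      = (\<Sum>k\<in>UNIV. (if k = b then (1 + real (outdeg E b)) * M $ a $ k else 0)
                   - (if (k, b) \<in> E then M $ a $ k else 0))"
    unfolding matrix_matrix_mult_def laplacian_def mat_def by (auto intro!: sum.cong simp: algebra_simps)
  also have "\<dots> = (1 + real (outdeg E b)) * M $ a $ b - (\<Sum>k\<in>in_nbrs E b. M $ a $ k)"
    by (simp add: sum_subtractf sum.If_cases in_nbrs_def)
  finally show ?thesis .
qed

lemma laplacian_mult_root_fraction:
  fixes E :: "('n::finite \<times> 'n) set"
  shows "(mat 1 + laplacian E)
      ** (\<chi> a b. card {F \<in> conv_forests E. root_of F a = b} / card (conv_forests E)) = mat 1"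
    (is "_ ** ?R = _")
proof -
  define N where "N = real (card (conv_forests E))"
  have "conv_forests E \<noteq> {}" using empty_in_conv_forests[of E] by blast
  then have "N > 0" unfolding N_def by (simp add: card_gt_0_iff)
  have count: "real (card {F \<in> conv_forests E. root_of F a = b})
      = (\<Sum>F\<in>conv_forests E. of_bool (root_of F a = b))" for a b
    by (simp add: Int_def)
  have "((mat 1 + laplacian E) ** ?R) $ a $ b = mat 1 $ a $ b" for a b
  proof -
    have "((mat 1 + laplacian E) ** ?R) $ a $ b
        = ((1 + real (outdeg E a)) * (\<Sum>F\<in>conv_forests E. of_bool (root_of F a = b))
          - (\<Sum>k | (a, k) \<in> E. \<Sum>F\<in>conv_forests E. of_bool (root_of F k = b))) / N"
      unfolding laplacian_mult_nth by (simp add: count N_def diff_divide_distrib sum_divide_distrib[symmetric] del: sum_of_bool_eq)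
    also have "\<dots> = mat 1 $ a $ b"
      using root_count_identity[where E = E and i = a and j = b] \<open>N > 0\<close> \<open>conv_forests E \<noteq> {}\<close>
      unfolding N_def by (simp add: mat_def)
    finally show ?thesis .
  qed
  then show ?thesis by (simp add: vec_eq_iff)
qed

theorem forest_matrix_eq_root_fraction:
  "forest_matrix (E :: ('n::finite \<times> 'n) set)
     = (\<chi> a b. card {F \<in> conv_forests E. root_of F a = b} / card (conv_forests E))"
  unfolding forest_matrix_def by (rule matrix_inv_eqI[OF laplacian_mult_root_fraction])

lemma forest_matrix_mult_laplacian:
  "forest_matrix (E :: ('n::finite \<times> 'n) set) ** (mat 1 + laplacian E) = mat 1"
  using laplacian_mult_root_fraction matrix_left_right_inverse
  unfolding forest_matrix_eq_root_fraction by blast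

lemma sum_in_nbrs_forest_matrix:
  fixes E :: "('n::finite \<times> 'n) set"
  shows "(\<Sum>k\<in>in_nbrs E b. forest_matrix E $ a $ k)
       = (1 + real (outdeg E b)) * forest_matrix E $ a $ b - of_bool (a = b)"
proof -
  have "(forest_matrix E ** (mat 1 + laplacian E)) $ a $ b = of_bool (a = b)"
    unfolding forest_matrix_mult_laplacian by (simp add: mat_def)
  then show ?thesis unfolding mult_laplacian_nth by linarith
qed

section \<open>Concentration of means of i.i.d. samples\<close>

lemma Chernoff_ineq_Pi_pmf:
  fixes p :: "'a pmf" and g :: "'a \<Rightarrow> real"
  assumes fin: "finite (set_pmf p)" and "\<theta> \<ge> 0"
    and mgf: "measure_pmf.expectation p (\<lambda>x. exp (\<theta> * g x)) \<le> exp \<psi>"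
  shows "measure_pmf.prob (Pi_pmf {..<l} d (\<lambda>_. p)) {\<phi>. real l * s \<le> (\<Sum>t<l. g (\<phi> t))}
         \<le> exp (real l * (\<psi> - \<theta> * s))"
proof -
  define Q where "Q = Pi_pmf {..<l} d (\<lambda>_. p)"
  define u where "u \<phi> = (\<Prod>t<l. exp (\<theta> * g (\<phi> t)))" for \<phi>
  have u_eq: "u \<phi> = exp (\<theta> * (\<Sum>t<l. g (\<phi> t)))" for \<phi>
    unfolding u_def by (simp add: exp_sum sum_distrib_left)
  have int: "integrable (measure_pmf p) (\<lambda>x. exp (\<theta> * g x))"
    by (rule integrable_measure_pmf_finite[OF fin])
  have "measure_pmf.prob Q {\<phi>. real l * s \<le> (\<Sum>t<l. g (\<phi> t))}
      \<le> measure_pmf.prob Q {\<phi> \<in> space (measure_pmf Q). exp (\<theta> * (real l * s)) \<le> u \<phi>}"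
    using \<open>\<theta> \<ge> 0\<close> by (intro measure_pmf.finite_measure_mono) (auto simp: u_eq intro: mult_left_mono)
  also have "\<dots> \<le> measure_pmf.expectation Q u / exp (\<theta> * (real l * s))"
    unfolding Q_def u_def
    by (intro integral_Markov_inequality_measure integrable_prod_Pi_pmf int) (auto intro!: AE_I2 prod_nonneg)
  also have "measure_pmf.expectation Q u = (measure_pmf.expectation p (\<lambda>x. exp (\<theta> * g x))) ^ l"
    unfolding Q_def u_def by (subst expectation_prod_Pi_pmf) (simp_all add: int)
  also have "\<dots> \<le> (exp \<psi>) ^ l"
    by (intro power_mono mgf integral_nonneg_AE) simp
  also have "(exp \<psi>) ^ l / exp (\<theta> * (real l * s)) = exp (real l * (\<psi> - \<theta> * s))"
    by (simp add: exp_of_nat_mult[symmetric] exp_diff[symmetric] algebra_simps)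
  finally show ?thesis
    unfolding Q_def by (simp add: divide_right_mono)
qed

lemma Hoeffding_ineq_Pi_pmf_ge:
  fixes p :: "'a pmf" and g :: "'a \<Rightarrow> real"
  assumes fin: "finite (set_pmf p)" and bnd: "\<And>x. x \<in> set_pmf p \<Longrightarrow> a \<le> g x \<and> g x \<le> b"
    and "a < b" "0 < s"
  shows "measure_pmf.prob (Pi_pmf {..<l} d (\<lambda>_. p))
           {\<phi>. real l * s \<le> (\<Sum>t<l. g (\<phi> t) - measure_pmf.expectation p g)}
         \<le> exp (- (2 * real l * s\<^sup>2 / (b - a)\<^sup>2))"
proof -
  define c where "c = b - a"
  define \<theta> where "\<theta> = 4 * s / c\<^sup>2"
  have "c > 0" "\<theta> > 0" using assms(3,4) by (simp_all add: c_def \<theta>_def)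
  interpret interval_bounded_random_variable "measure_pmf p" g a b
    by unfold_locales (auto intro!: AE_pmfI dest: bnd)
  have "ennreal (measure_pmf.expectation p (\<lambda>x. exp (\<theta> * (g x - measure_pmf.expectation p g))))
      = nn_integral (measure_pmf p) (\<lambda>x. exp (\<theta> * (g x - measure_pmf.expectation p g)))"
    by (rule nn_integral_eq_integral[symmetric]) (auto intro: integrable_measure_pmf_finite[OF fin])
  also have "\<dots> \<le> ennreal (exp (\<theta>\<^sup>2 * (b - a)\<^sup>2 / 8))"
    by (rule Hoeffdings_lemma_nn_integral[OF \<open>\<theta> > 0\<close>])
  finally have "measure_pmf.expectation p (\<lambda>x. exp (\<theta> * (g x - measure_pmf.expectation p g)))
      \<le> exp (\<theta>\<^sup>2 * c\<^sup>2 / 8)"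
    by (simp add: ennreal_le_iff c_def)
  from Chernoff_ineq_Pi_pmf[OF fin less_imp_le[OF \<open>\<theta> > 0\<close>] this]
  have "measure_pmf.prob (Pi_pmf {..<l} d (\<lambda>_. p))
           {\<phi>. real l * s \<le> (\<Sum>t<l. g (\<phi> t) - measure_pmf.expectation p g)}
        \<le> exp (real l * (\<theta>\<^sup>2 * c\<^sup>2 / 8 - \<theta> * s))" .
  also have "real l * (\<theta>\<^sup>2 * c\<^sup>2 / 8 - \<theta> * s) = - (2 * real l * s\<^sup>2 / c\<^sup>2)"
    using \<open>c > 0\<close> by (simp add: \<theta>_def field_simps power2_eq_square)
  finally show ?thesis unfolding c_def .
qed

lemma Hoeffding_ineq_Pi_pmf_le:
  fixes p :: "'a pmf" and g :: "'a \<Rightarrow> real"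
  assumes fin: "finite (set_pmf p)" and bnd: "\<And>x. x \<in> set_pmf p \<Longrightarrow> a \<le> g x \<and> g x \<le> b"
    and "a < b" "0 < s"
  shows "measure_pmf.prob (Pi_pmf {..<l} d (\<lambda>_. p))
           {\<phi>. real l * s \<le> (\<Sum>t<l. measure_pmf.expectation p g - g (\<phi> t))}
         \<le> exp (- (2 * real l * s\<^sup>2 / (b - a)\<^sup>2))"
proof -
  have "(\<Sum>t<l. - g (\<phi> t) - measure_pmf.expectation p (\<lambda>x. - g x))
      = (\<Sum>t<l. measure_pmf.expectation p g - g (\<phi> t))" for \<phi>
    by (rule sum.cong) simp_all
  moreover have "(- a - - b)\<^sup>2 = (b - a)\<^sup>2" by (simp add: power2_commute)
  ultimately show ?thesis
    using Hoeffding_ineq_Pi_pmf_ge[OF fin, of "- b" "\<lambda>x. - g x" "- a" s l d] bnd assms(3,4) by simp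
qed

lemma two_mult_three_pow_le_fact: "2 * 3 ^ n \<le> (fact (n + 2) :: real)"
proof (induction n)
  case (Suc n)
  have "2 * 3 ^ Suc n = 3 * (2 * 3 ^ n :: real)" by simp
  also have "\<dots> \<le> 3 * fact (n + 2)" using Suc.IH by (rule mult_left_mono) simp
  also have "\<dots> \<le> real (n + 3) * fact (n + 2)" by (intro mult_right_mono) auto
  also have "\<dots> = fact (Suc n + 2)" by (simp add: fact_Suc algebra_simps)
  finally show ?case .
qed simp

lemma exp_le_Bernstein:
  fixes y \<theta> :: real
  assumes y: "\<bar>y\<bar> \<le> 1" and \<theta>: "0 \<le> \<theta>" "\<theta> < 3"
  shows "exp (\<theta> * y) \<le> 1 + \<theta> * y + y\<^sup>2 * (\<theta>\<^sup>2 / (2 * (1 - \<theta> / 3)))"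
proof -
  have geom: "(\<lambda>n. y\<^sup>2 * (\<theta>\<^sup>2 / 2 * (\<theta> / 3) ^ n)) sums (y\<^sup>2 * (\<theta>\<^sup>2 / 2 * (1 / (1 - \<theta> / 3))))"
    using \<theta> by (intro sums_mult geometric_sums) simp
  have "(\<Sum>n. inverse (fact (n + 2)) * (\<theta> * y) ^ (n + 2)) \<le> (\<Sum>n. y\<^sup>2 * (\<theta>\<^sup>2 / 2 * (\<theta> / 3) ^ n))"
  proof (rule suminf_le)
    fix n
    have pow: "(\<theta> * y) ^ (n + 2) \<le> y\<^sup>2 * \<theta> ^ (n + 2)"
    proof -
      have "\<bar>y\<bar> ^ n \<le> 1" using y by (intro power_le_one) auto
      then have "y ^ n \<le> 1" by (metis abs_ge_self order_trans power_abs)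
      then have "(y\<^sup>2 * \<theta> ^ (n + 2)) * y ^ n \<le> y\<^sup>2 * \<theta> ^ (n + 2)"
        using \<theta>(1) by (intro mult_left_le) auto
      then show ?thesis by (simp add: power_mult_distrib power_add power2_eq_square mult_ac)
    qed
    have "inverse (fact (n + 2)) * (\<theta> * y) ^ (n + 2) \<le> inverse (fact (n + 2)) * (y\<^sup>2 * \<theta> ^ (n + 2))"
      by (rule mult_left_mono[OF pow]) simp
    also have "\<dots> \<le> inverse (2 * 3 ^ n) * (y\<^sup>2 * \<theta> ^ (n + 2))"
      using \<theta>(1) by (intro mult_right_mono le_imp_inverse_le two_mult_three_pow_le_fact) auto
    also have "\<dots> = y\<^sup>2 * (\<theta>\<^sup>2 / 2 * (\<theta> / 3) ^ n)"
      by (simp add: power_add power_divide power2_eq_square field_simps)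
    finally show "inverse (fact (n + 2)) * (\<theta> * y) ^ (n + 2) \<le> y\<^sup>2 * (\<theta>\<^sup>2 / 2 * (\<theta> / 3) ^ n)" .
    show "summable (\<lambda>n. inverse (fact (n + 2)) * (\<theta> * y) ^ (n + 2))"
      by (rule summable_exp[THEN summable_ignore_initial_segment])
    show "summable (\<lambda>n. y\<^sup>2 * (\<theta>\<^sup>2 / 2 * (\<theta> / 3) ^ n))"
      using geom by (rule sums_summable)
  qed
  also have "\<dots> = y\<^sup>2 * (\<theta>\<^sup>2 / (2 * (1 - \<theta> / 3)))"
    using geom by (simp add: sums_iff)
  finally show ?thesis
    unfolding exp_first_two_terms[of "\<theta> * y"] by simp
qed

lemma Bernstein_mgf_le:
  fixes p :: "'a pmf" and Y :: "'a \<Rightarrow> real"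
  assumes fin: "finite (set_pmf p)" and bnd: "\<And>x. x \<in> set_pmf p \<Longrightarrow> \<bar>Y x\<bar> \<le> 1"
    and mean: "measure_pmf.expectation p Y = 0"
    and var: "measure_pmf.expectation p (\<lambda>x. (Y x)\<^sup>2) \<le> v"
    and \<theta>: "0 \<le> \<theta>" "\<theta> < 3"
  shows "measure_pmf.expectation p (\<lambda>x. exp (\<theta> * Y x)) \<le> exp (v * (\<theta>\<^sup>2 / (2 * (1 - \<theta> / 3))))"
proof -
  define c where "c = \<theta>\<^sup>2 / (2 * (1 - \<theta> / 3))"
  have "c \<ge> 0" using \<theta> by (simp add: c_def)
  have int: "integrable (measure_pmf p) f" for f :: "'a \<Rightarrow> real"
    by (rule integrable_measure_pmf_finite[OF fin])
  have "measure_pmf.expectation p (\<lambda>x. exp (\<theta> * Y x))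
      \<le> measure_pmf.expectation p (\<lambda>x. 1 + \<theta> * Y x + (Y x)\<^sup>2 * c)"
    unfolding c_def by (intro integral_mono_AE[OF int int] AE_pmfI exp_le_Bernstein bnd \<theta>)
  also have "\<dots> = 1 + \<theta> * measure_pmf.expectation p Y + measure_pmf.expectation p (\<lambda>x. (Y x)\<^sup>2) * c"
    by (simp add: int)
  also have "\<dots> \<le> 1 + v * c" using mean var \<open>c \<ge> 0\<close> by (simp add: mult_right_mono)
  also have "\<dots> \<le> exp (v * c)" by (rule exp_ge_add_one_self)
  finally show ?thesis unfolding c_def .
qed

lemma Bernstein_exponent:
  fixes v t :: real
  assumes "0 \<le> v" "0 < t"
  obtains \<theta> where "0 \<le> \<theta>" "\<theta> < 3"
    "v * (\<theta>\<^sup>2 / (2 * (1 - \<theta> / 3))) - \<theta> * t = - (t\<^sup>2 / (2 * (v + t / 3)))"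
  \<comment> \<open>\<open>\<theta> = t / (v + t / 3)\<close> minimises the left-hand side;
    for \<open>v = 0\<close> already \<open>\<theta> = 3 / 2\<close> attains it.\<close>
proof (cases "v = 0")
  case True
  have "t\<^sup>2 / (2 * (v + t / 3)) = 3 / 2 * t" using True \<open>0 < t\<close> by (simp add: power2_eq_square)
  then show ?thesis by (intro that[of "3 / 2"]) (simp_all add: True)
next
  case False
  define T where "T = 3 * v + t"
  have "v > 0" "T > 0" "t < T" using False \<open>0 \<le> v\<close> \<open>0 < t\<close> by (simp_all add: T_def)
  have "1 - (3 * t / T) / 3 = 3 * v / T" using \<open>T > 0\<close> by (simp add: T_def field_simps)
  then have "v * ((3 * t / T)\<^sup>2 / (2 * (1 - (3 * t / T) / 3))) = v * ((3 * t / T)\<^sup>2 / (2 * (3 * v / T)))"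
    by (simp only:)
  also have "\<dots> = 3 * t\<^sup>2 / (2 * T)"
    using \<open>v > 0\<close> \<open>T > 0\<close> by (simp add: field_simps power2_eq_square)
  finally have "v * ((3 * t / T)\<^sup>2 / (2 * (1 - (3 * t / T) / 3))) = 3 * t\<^sup>2 / (2 * T)" .
  moreover have "3 * t / T * t = 2 * (3 * t\<^sup>2 / (2 * T))" by (simp add: power2_eq_square)
  moreover have "t\<^sup>2 / (2 * (v + t / 3)) = 3 * t\<^sup>2 / (2 * T)" by (simp add: T_def field_simps)
  ultimately have "v * ((3 * t / T)\<^sup>2 / (2 * (1 - (3 * t / T) / 3))) - 3 * t / T * t
      = - (t\<^sup>2 / (2 * (v + t / 3)))" by linarith
  moreover have "0 \<le> 3 * t / T" "3 * t / T < 3"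
    using \<open>T > 0\<close> \<open>0 < t\<close> \<open>t < T\<close> by (simp_all add: divide_less_eq)
  ultimately show ?thesis by (intro that[of "3 * t / T"])
qed

lemma Bernstein_ineq_Pi_pmf:
  fixes p :: "'a pmf" and Y :: "'a \<Rightarrow> real"
  assumes fin: "finite (set_pmf p)" and bnd: "\<And>x. x \<in> set_pmf p \<Longrightarrow> \<bar>Y x\<bar> \<le> 1"
    and mean: "measure_pmf.expectation p Y = 0"
    and var: "measure_pmf.expectation p (\<lambda>x. (Y x)\<^sup>2) \<le> v"
    and "0 \<le> v" "0 < t"
  shows "measure_pmf.prob (Pi_pmf {..<l} d (\<lambda>_. p)) {\<phi>. real l * t \<le> (\<Sum>s<l. Y (\<phi> s))}
         \<le> exp (- (real l * t\<^sup>2 / (2 * (v + t / 3))))"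
proof -
  obtain \<theta> where \<theta>: "0 \<le> \<theta>" "\<theta> < 3"
    and exponent: "v * (\<theta>\<^sup>2 / (2 * (1 - \<theta> / 3))) - \<theta> * t = - (t\<^sup>2 / (2 * (v + t / 3)))"
    using Bernstein_exponent[OF \<open>0 \<le> v\<close> \<open>0 < t\<close>] by blast
  have "measure_pmf.prob (Pi_pmf {..<l} d (\<lambda>_. p)) {\<phi>. real l * t \<le> (\<Sum>s<l. Y (\<phi> s))}
      \<le> exp (real l * (v * (\<theta>\<^sup>2 / (2 * (1 - \<theta> / 3))) - \<theta> * t))"
    by (rule Chernoff_ineq_Pi_pmf[OF fin \<theta>(1) Bernstein_mgf_le[OF fin bnd mean var \<theta>]])
  then show ?thesis unfolding exponent by simp
qed

lemma prob_sample_mean_within: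
  fixes Q :: "(nat \<Rightarrow> 'a) pmf" and g :: "'a \<Rightarrow> real"
  assumes "l > 0"
    and upper: "measure_pmf.prob Q {\<phi>. real l * s \<le> (\<Sum>t<l. g (\<phi> t) - \<mu>)} \<le> \<delta> / 2"
    and lower: "measure_pmf.prob Q {\<phi>. real l * s \<le> (\<Sum>t<l. \<mu> - g (\<phi> t))} \<le> \<delta> / 2"
  shows "1 - \<delta> \<le> measure_pmf.prob Q
           {\<phi>. \<mu> - s \<le> 1 / real l * (\<Sum>t<l. g (\<phi> t)) \<and> 1 / real l * (\<Sum>t<l. g (\<phi> t)) \<le> \<mu> + s}"
    (is "_ \<le> measure_pmf.prob Q ?G")
proof -
  define U where "U = {\<phi>. real l * s \<le> (\<Sum>t<l. g (\<phi> t) - \<mu>)}"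
  define L where "L = {\<phi>. real l * s \<le> (\<Sum>t<l. \<mu> - g (\<phi> t))}"
  have "- ?G \<subseteq> U \<union> L"
  proof
    fix \<phi> assume "\<phi> \<in> - ?G"
    define m where "m = 1 / real l * (\<Sum>t<l. g (\<phi> t))"
    have "(\<Sum>t<l. g (\<phi> t) - \<mu>) = real l * (m - \<mu>)" "(\<Sum>t<l. \<mu> - g (\<phi> t)) = real l * (\<mu> - m)"
      using \<open>l > 0\<close> by (simp_all add: m_def sum_subtractf right_diff_distrib)
    moreover have "s \<le> m - \<mu> \<or> s \<le> \<mu> - m" using \<open>\<phi> \<in> - ?G\<close> unfolding m_def by auto
    ultimately show "\<phi> \<in> U \<union> L" unfolding U_def L_def using \<open>l > 0\<close> by auto
  qed
  then have "measure_pmf.prob Q (- ?G) \<le> measure_pmf.prob Q (U \<union> L)"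
    by (intro measure_pmf.finite_measure_mono) simp_all
  also have "\<dots> \<le> measure_pmf.prob Q U + measure_pmf.prob Q L"
    by (rule measure_Un_le) simp_all
  finally have "measure_pmf.prob Q (- ?G) \<le> \<delta>" using upper lower unfolding U_def L_def by simp
  then show ?thesis using measure_pmf.prob_compl[of ?G Q] by (simp add: Compl_eq_Diff_UNIV)
qed

lemma Hoeffding_sample_mean:
  fixes p :: "'a pmf" and g :: "'a \<Rightarrow> real"
  assumes fin: "finite (set_pmf p)" and bnd: "\<And>x. x \<in> set_pmf p \<Longrightarrow> a \<le> g x \<and> g x \<le> b"
    and "a < b" "0 < s" "0 < l" and tail: "exp (- (2 * real l * s\<^sup>2 / (b - a)\<^sup>2)) \<le> \<delta> / 2"
  shows "1 - \<delta> \<le> measure_pmf.prob (Pi_pmf {..<l} d (\<lambda>_. p))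
           {\<phi>. measure_pmf.expectation p g - s \<le> 1 / real l * (\<Sum>t<l. g (\<phi> t)) \<and>
               1 / real l * (\<Sum>t<l. g (\<phi> t)) \<le> measure_pmf.expectation p g + s}"
  by (rule prob_sample_mean_within[OF \<open>0 < l\<close>
      order.trans[OF Hoeffding_ineq_Pi_pmf_ge[OF fin bnd assms(3,4)] tail]
      order.trans[OF Hoeffding_ineq_Pi_pmf_le[OF fin bnd assms(3,4)] tail]])

lemma Bernstein_sample_mean:
  fixes p :: "'a pmf" and g :: "'a \<Rightarrow> real"
  assumes fin: "finite (set_pmf p)"
    and bnd: "\<And>x. x \<in> set_pmf p \<Longrightarrow> \<bar>g x - measure_pmf.expectation p g\<bar> \<le> c"
    and var: "measure_pmf.expectation p (\<lambda>x. (g x - measure_pmf.expectation p g)\<^sup>2) \<le> c\<^sup>2 * v"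
    and "0 < c" "0 \<le> v" "0 < t" "0 < l"
    and tail: "exp (- (real l * t\<^sup>2 / (2 * (v + t / 3)))) \<le> \<delta> / 2"
  shows "1 - \<delta> \<le> measure_pmf.prob (Pi_pmf {..<l} d (\<lambda>_. p))
           {\<phi>. measure_pmf.expectation p g - c * t \<le> 1 / real l * (\<Sum>s<l. g (\<phi> s)) \<and>
               1 / real l * (\<Sum>s<l. g (\<phi> s)) \<le> measure_pmf.expectation p g + c * t}"
proof -
  define \<mu> where "\<mu> = measure_pmf.expectation p g"
  define Y where "Y x = (g x - \<mu>) / c" for x
  have int: "integrable (measure_pmf p) f" for f :: "'a \<Rightarrow> real"
    by (rule integrable_measure_pmf_finite[OF fin])
  have Y_bnd: "\<bar>Y x\<bar> \<le> 1" "\<bar>- Y x\<bar> \<le> 1" if "x \<in> set_pmf p" for x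
    using bnd[OF that] \<open>0 < c\<close> by (simp_all add: Y_def \<mu>_def abs_divide)
  have "measure_pmf.expectation p Y = (measure_pmf.expectation p g - \<mu>) / c"
    unfolding Y_def by (simp add: int)
  then have Y_mean: "measure_pmf.expectation p Y = 0" "measure_pmf.expectation p (\<lambda>x. - Y x) = 0"
    by (simp_all add: \<mu>_def)
  have "measure_pmf.expectation p (\<lambda>x. (Y x)\<^sup>2) = measure_pmf.expectation p (\<lambda>x. (g x - \<mu>)\<^sup>2) / c\<^sup>2"
    by (simp add: Y_def power_divide)
  then have Y_var: "measure_pmf.expectation p (\<lambda>x. (Y x)\<^sup>2) \<le> v"
    "measure_pmf.expectation p (\<lambda>x. (- Y x)\<^sup>2) \<le> v"
    using var \<open>0 < c\<close> by (simp_all add: \<mu>_def pos_divide_le_eq mult.commute)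
  have scale: "real l * (c * t) = c * (real l * t)"
    "(\<Sum>s<l. g (\<phi> s) - \<mu>) = c * (\<Sum>s<l. Y (\<phi> s))"
    "(\<Sum>s<l. \<mu> - g (\<phi> s)) = c * (\<Sum>s<l. - Y (\<phi> s))" for \<phi>
    using \<open>0 < c\<close> by (simp_all add: Y_def sum_distrib_left sum_negf sum_subtractf)
  note Bernstein = Bernstein_ineq_Pi_pmf[OF fin _ _ _ \<open>0 \<le> v\<close> \<open>0 < t\<close>, where l = l and d = d]
  have "measure_pmf.prob (Pi_pmf {..<l} d (\<lambda>_. p))
      {\<phi>. real l * (c * t) \<le> (\<Sum>s<l. g (\<phi> s) - \<mu>)} \<le> \<delta> / 2"
    using Bernstein[OF Y_bnd(1) Y_mean(1) Y_var(1)] tail \<open>0 < c\<close> by (simp add: scale)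
  moreover have "measure_pmf.prob (Pi_pmf {..<l} d (\<lambda>_. p))
      {\<phi>. real l * (c * t) \<le> (\<Sum>s<l. \<mu> - g (\<phi> s))} \<le> \<delta> / 2"
    using Bernstein[OF Y_bnd(2) Y_mean(2) Y_var(2)] tail \<open>0 < c\<close> by (simp add: scale)
  ultimately show ?thesis unfolding \<mu>_def by (rule prob_sample_mean_within[OF \<open>0 < l\<close>])
qed

section \<open>The forest estimator\<close>

lemma exp_minus_le_half:
  fixes \<delta> K :: real
  assumes "0 < \<delta>" "ln (2 / \<delta>) \<le> K"
  shows "exp (- K) \<le> \<delta> / 2"
proof -
  have "exp (- K) \<le> exp (- ln (2 / \<delta>))" using assms(2) by simp
  also have "\<dots> = \<delta> / 2" using assms(1) by (simp add: exp_minus)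
  finally show ?thesis .
qed

lemma set_pmf_uniform_forests:
  "set_pmf (pmf_of_set (conv_forests (E :: ('n::finite \<times> 'n) set))) = conv_forests E"
  using empty_in_conv_forests[of E] by (intro set_pmf_of_set) auto

lemma omega_hat_eq: "omega_hat F i k = of_bool (root_of F i = k)"
  by (simp add: omega_hat_def)

lemma sum_omega_hat: "finite S \<Longrightarrow> (\<Sum>k\<in>S. omega_hat F i k) = of_bool (root_of F i \<in> S)"
  unfolding omega_hat_def by (simp add: sum.delta)

lemma expectation_omega_hat:
  fixes E :: "('n::finite \<times> 'n) set"
  shows "measure_pmf.expectation (pmf_of_set (conv_forests E)) (\<lambda>F. omega_hat F i k)
       = forest_matrix E $ i $ k"
proof -
  have "conv_forests E \<noteq> {}" using empty_in_conv_forests[of E] by blast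
  then have "measure_pmf.expectation (pmf_of_set (conv_forests E)) (\<lambda>F. omega_hat F i k)
      = (\<Sum>F\<in>conv_forests E. of_bool (root_of F i = k)) / card (conv_forests E)"
    by (simp add: integral_pmf_of_set omega_hat_eq del: sum_of_bool_eq)
  then show ?thesis by (simp add: forest_matrix_eq_root_fraction Int_def)
qed

lemma expectation_sum_omega_hat:
  fixes E :: "('n::finite \<times> 'n) set"
  shows "measure_pmf.expectation (pmf_of_set (conv_forests E)) (\<lambda>F. \<Sum>k\<in>S. omega_hat F i k)
       = (\<Sum>k\<in>S. forest_matrix E $ i $ k)"
  by (simp add: Bochner_Integration.integral_sum integrable_measure_pmf_finite
      set_pmf_uniform_forests expectation_omega_hat)

lemma Hoeffding_sample_size:
  fixes \<epsilon> \<delta> c :: real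
  assumes "0 < \<epsilon>" "0 < \<delta>" "\<delta> < 1" "0 < c"
    and l: "l = nat \<lceil>c\<^sup>2 * (1 / (2 * \<epsilon>\<^sup>2) + 2 / (3 * \<epsilon>)) * ln (2 / \<delta>)\<rceil>"
  shows "0 < l" "exp (- (2 * real l * \<epsilon>\<^sup>2 / c\<^sup>2)) \<le> \<delta> / 2"
proof -
  define L where "L = c\<^sup>2 * (1 / (2 * \<epsilon>\<^sup>2) + 2 / (3 * \<epsilon>)) * ln (2 / \<delta>)"
  have "ln (2 / \<delta>) > 0" using assms(2,3) by simp
  then have "L > 0" unfolding L_def using assms(1,4) by (intro mult_pos_pos add_pos_pos) auto
  then show "0 < l" unfolding l L_def[symmetric] by simp
  have "c\<^sup>2 * (1 / (2 * \<epsilon>\<^sup>2)) * ln (2 / \<delta>) \<le> L"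
    unfolding L_def using assms(1) \<open>ln (2 / \<delta>) > 0\<close> by (intro mult_right_mono mult_left_mono) auto
  also have "L \<le> real l" unfolding l L_def[symmetric] by linarith
  finally have "ln (2 / \<delta>) \<le> 2 * real l * \<epsilon>\<^sup>2 / c\<^sup>2"
    using assms(1,4) by (simp add: field_simps)
  then show "exp (- (2 * real l * \<epsilon>\<^sup>2 / c\<^sup>2)) \<le> \<delta> / 2" by (rule exp_minus_le_half[OF assms(2)])
qed

lemma Bernstein_sample_size:
  fixes \<epsilon> \<delta> q :: real
  assumes "0 < \<epsilon>" "0 < \<delta>" "\<delta> < 1" "0 \<le> q" "q \<le> 1"
    and l: "l = nat \<lceil>(2 / (3 * \<epsilon>) + 1 / (4 * \<epsilon>\<^sup>2)) * ln (2 / \<delta>)\<rceil>"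
  shows "0 < l"
    "exp (- (real l * (\<epsilon> * (1 + q))\<^sup>2 / (2 * (q - q\<^sup>2 + \<epsilon> * (1 + q) / 3)))) \<le> \<delta> / 2"
proof -
  define K where "K = 2 / (3 * \<epsilon>) + 1 / (4 * \<epsilon>\<^sup>2)"
  define X where "X = (\<epsilon> * (1 + q))\<^sup>2 / (2 * (q - q\<^sup>2 + \<epsilon> * (1 + q) / 3))"
  have "q\<^sup>2 \<le> q" using assms(4,5) by (simp add: power2_eq_square mult_left_le)
  have "ln (2 / \<delta>) > 0" using assms(2,3) by simp
  then have "K * ln (2 / \<delta>) > 0" unfolding K_def using assms(1) by (intro mult_pos_pos add_pos_pos) auto
  then show "0 < l" unfolding l K_def[symmetric] by simp
  define D where "D = 2 * (q - q\<^sup>2 + \<epsilon> * (1 + q) / 3)"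
  have "D > 0" unfolding D_def using \<open>q\<^sup>2 \<le> q\<close> assms(1,4) by (simp add: add_nonneg_pos)
  then have "X \<ge> 0" unfolding X_def D_def[symmetric] by simp
  have "(\<epsilon> * (1 + q))\<^sup>2 * K - D = (3 * q - 1)\<^sup>2 / 4 + 2 * \<epsilon> * q * (1 + q) / 3"
    using assms(1) unfolding K_def D_def by (simp add: field_simps power2_eq_square)
  also have "\<dots> \<ge> 0" using assms(1,4) by simp
  finally have "D \<le> (\<epsilon> * (1 + q))\<^sup>2 * K" by simp
  then have "1 \<le> X * K" unfolding X_def D_def[symmetric] using \<open>D > 0\<close> by (simp add: le_divide_eq)
  then have "ln (2 / \<delta>) \<le> K * ln (2 / \<delta>) * X"
    using \<open>ln (2 / \<delta>) > 0\<close> by (simp add: mult_le_cancel_left1 mult.commute mult.left_commute)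
  also have "\<dots> \<le> real l * X"
    unfolding l K_def[symmetric] using \<open>X \<ge> 0\<close> by (intro mult_right_mono) linarith+
  finally show "exp (- (real l * (\<epsilon> * (1 + q))\<^sup>2 / (2 * (q - q\<^sup>2 + \<epsilon> * (1 + q) / 3)))) \<le> \<delta> / 2"
    using exp_minus_le_half[OF assms(2)] unfolding X_def by simp
qed

lemma omega_bar_offdiag_concentration:
  fixes E :: "('n::finite \<times> 'n) set" and \<epsilon> \<delta> :: real
  assumes loopless: "\<forall>i. (i, i) \<notin> E" and "0 < \<epsilon>" "0 < \<delta>" "\<delta> < 1" "i \<noteq> j"
    and l: "l = nat \<lceil>(1 / (2 + real (outdeg E j))^2) * (1 / (2 * \<epsilon>^2) + 2 / (3 * \<epsilon>)) * ln (2 / \<delta>)\<rceil>"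
  shows "measure_pmf.prob (forest_samples E l)
          {phis. forest_matrix E $ i $ j - \<epsilon> \<le> omega_bar E l phis i j \<and>
                 omega_bar E l phis i j \<le> forest_matrix E $ i $ j + \<epsilon>} \<ge> 1 - \<delta>"
proof -
  define U where "U = pmf_of_set (conv_forests E)"
  define c where "c = 1 / (2 + real (outdeg E j))"
  define g where "g F = c * (omega_hat F i j + (\<Sum>k\<in>in_nbrs E j. omega_hat F i k))" for F
  have "c > 0" by (simp add: c_def)
  have fin: "finite (set_pmf U)" by (simp add: U_def set_pmf_uniform_forests)
  have "j \<notin> in_nbrs E j" using loopless by (simp add: in_nbrs_def)
  then have "g F = c * of_bool (root_of F i \<in> insert j (in_nbrs E j))" for F
    unfolding g_def using sum_omega_hat[of "insert j (in_nbrs E j)" F i] by simp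
  then have g_bounds: "0 \<le> g F \<and> g F \<le> c" if "F \<in> set_pmf U" for F using \<open>c > 0\<close> by simp
  have "measure_pmf.expectation U g
      = c * (forest_matrix E $ i $ j + (\<Sum>k\<in>in_nbrs E j. forest_matrix E $ i $ k))"
    unfolding g_def U_def using fin[unfolded U_def]
    by (simp add: integrable_measure_pmf_finite expectation_omega_hat expectation_sum_omega_hat)
  also have "\<dots> = forest_matrix E $ i $ j"
    using \<open>i \<noteq> j\<close> by (simp add: sum_in_nbrs_forest_matrix c_def field_simps)
  finally have mean: "measure_pmf.expectation U g = forest_matrix E $ i $ j" .
  have "c\<^sup>2 = 1 / (2 + real (outdeg E j))^2" by (simp add: c_def power_one_over)
  note size = Hoeffding_sample_size[OF \<open>0 < \<epsilon>\<close> \<open>0 < \<delta>\<close> \<open>\<delta> < 1\<close> \<open>c > 0\<close> l[folded this]]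
  have "omega_bar E l phis i j = 1 / real l * (\<Sum>t<l. g (phis t))" for phis
    using \<open>i \<noteq> j\<close> by (simp add: omega_bar_def g_def c_def sum_distrib_left)
  then show ?thesis
    using Hoeffding_sample_mean[where g = g and d = "{}", OF fin g_bounds \<open>c > 0\<close> \<open>0 < \<epsilon>\<close> size(1)] size(2)
    unfolding forest_samples_def U_def[symmetric] mean by simp
qed

lemma indicator_variance:
  fixes p :: "'a pmf" and B :: "'a \<Rightarrow> real"
  assumes fin: "finite (set_pmf p)" and B: "\<And>x. B x = 0 \<or> B x = 1"
  shows "0 \<le> measure_pmf.expectation p B" "measure_pmf.expectation p B \<le> 1"
    "measure_pmf.expectation p (\<lambda>x. (B x - measure_pmf.expectation p B)\<^sup>2)
       = measure_pmf.expectation p B - (measure_pmf.expectation p B)\<^sup>2"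
proof -
  define q where "q = measure_pmf.expectation p B"
  have int: "integrable (measure_pmf p) f" for f :: "'a \<Rightarrow> real"
    by (rule integrable_measure_pmf_finite[OF fin])
  have "0 \<le> B x" "B x \<le> 1" for x using B[of x] by auto
  then show "0 \<le> measure_pmf.expectation p B" by (intro integral_nonneg_AE AE_I2)
  have "measure_pmf.expectation p B \<le> measure_pmf.expectation p (\<lambda>_. 1)"
    by (rule integral_mono[OF int int]) (simp add: \<open>\<And>x. B x \<le> 1\<close>)
  then show "measure_pmf.expectation p B \<le> 1" by simp
  have "(\<lambda>x. (B x - q)\<^sup>2) = (\<lambda>x. (1 - 2 * q) * B x + q\<^sup>2)"
    using B by (auto simp: fun_eq_iff power2_eq_square algebra_simps)
  then have "measure_pmf.expectation p (\<lambda>x. (B x - q)\<^sup>2) = (1 - 2 * q) * q + q\<^sup>2"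
    by (simp add: int q_def)
  then show "measure_pmf.expectation p (\<lambda>x. (B x - measure_pmf.expectation p B)\<^sup>2)
      = measure_pmf.expectation p B - (measure_pmf.expectation p B)\<^sup>2"
    unfolding q_def by (simp add: power2_eq_square algebra_simps)
qed

lemma omega_bar_diag_concentration:
  fixes E :: "('n::finite \<times> 'n) set" and \<epsilon> \<delta> :: real
  assumes "0 < \<epsilon>" "0 < \<delta>" "\<delta> < 1"
    and l: "l = nat \<lceil>(2 / (3 * \<epsilon>) + 1 / (4 * \<epsilon>^2)) * ln (2 / \<delta>)\<rceil>"
  shows "measure_pmf.prob (forest_samples E l)
          {phis. (1 - \<epsilon>) * forest_matrix E $ i $ i \<le> omega_bar E l phis i i \<and>
                 omega_bar E l phis i i \<le> (1 + \<epsilon>) * forest_matrix E $ i $ i} \<ge> 1 - \<delta>"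
proof -
  define U where "U = pmf_of_set (conv_forests E)"
  define c where "c = 1 / (1 + real (outdeg E i))"
  define B where "B F = (\<Sum>k\<in>in_nbrs E i. omega_hat F i k)" for F
  define q where "q = measure_pmf.expectation U B"
  define g where "g F = c * (1 + B F)" for F
  have "c > 0" by (simp add: c_def)
  have fin: "finite (set_pmf U)" by (simp add: U_def set_pmf_uniform_forests)
  have int: "integrable (measure_pmf U) f" for f :: "_ \<Rightarrow> real"
    by (rule integrable_measure_pmf_finite[OF fin])
  have "B F = 0 \<or> B F = 1" for F by (simp add: B_def sum_omega_hat)
  note B = indicator_variance[where B = B, OF fin this, folded q_def]
  have "q = (\<Sum>k\<in>in_nbrs E i. forest_matrix E $ i $ k)"
    unfolding q_def B_def U_def by (rule expectation_sum_omega_hat)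
  then have "c * (1 + q) = forest_matrix E $ i $ i"
    unfolding c_def by (simp add: sum_in_nbrs_forest_matrix field_simps)
  moreover have "measure_pmf.expectation U g = c * (1 + q)" unfolding g_def q_def by (simp add: int)
  ultimately have mean: "measure_pmf.expectation U g = forest_matrix E $ i $ i" by simp
  have dev: "g F - measure_pmf.expectation U g = c * (B F - q)" for F
    by (simp add: g_def \<open>measure_pmf.expectation U g = c * (1 + q)\<close> algebra_simps)
  have "\<bar>B F - q\<bar> \<le> 1" for F using B(1,2) \<open>B F = 0 \<or> B F = 1\<close> by auto
  then have g_bnd: "\<bar>g F - measure_pmf.expectation U g\<bar> \<le> c" if "F \<in> set_pmf U" for F
    using \<open>c > 0\<close> by (simp add: dev abs_mult)
  have g_var: "measure_pmf.expectation U (\<lambda>F. (g F - measure_pmf.expectation U g)\<^sup>2) \<le> c\<^sup>2 * (q - q\<^sup>2)"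
    using B(3) by (simp add: dev power_mult_distrib int)
  have "q\<^sup>2 \<le> q" using B(1,2) by (simp add: power2_eq_square mult_left_le)
  note size = Bernstein_sample_size[OF \<open>0 < \<epsilon>\<close> \<open>0 < \<delta>\<close> \<open>\<delta> < 1\<close> B(1,2) l]
  have "0 < \<epsilon> * (1 + q)" using \<open>0 < \<epsilon>\<close> B(1) by simp
  from Bernstein_sample_mean[where g = g and d = "{}", OF fin g_bnd g_var \<open>c > 0\<close> _ this size]
    \<open>q\<^sup>2 \<le> q\<close>
  have "1 - \<delta> \<le> measure_pmf.prob (Pi_pmf {..<l} {} (\<lambda>_. U))
      {\<phi>. (1 - \<epsilon>) * forest_matrix E $ i $ i \<le> 1 / real l * (\<Sum>s<l. g (\<phi> s)) \<and>
          1 / real l * (\<Sum>s<l. g (\<phi> s)) \<le> (1 + \<epsilon>) * forest_matrix E $ i $ i}"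
    unfolding mean \<open>c * (1 + q) = forest_matrix E $ i $ i\<close>[symmetric] by (simp add: algebra_simps)
  moreover have "omega_bar E l phis i i = 1 / real l * (\<Sum>t<l. g (phis t))" for phis
    by (simp add: omega_bar_def g_def B_def c_def sum_distrib_left)
  ultimately show ?thesis unfolding forest_samples_def U_def by simp
qed

theorem theorem4p5:
  fixes E :: "('n::finite \<times> 'n) set" and \<epsilon> \<delta> :: real
  assumes simple: "\<forall>i. (i, i) \<notin> E"
    and eps: "0 < \<epsilon>" "\<epsilon> < 1" and del: "0 < \<delta>" "\<delta> < 1"
  shows
    "(\<forall>i j l. i \<noteq> j \<longrightarrow>
        l = nat \<lceil>(1 / (2 + real (outdeg E j))^2) * (1 / (2 * \<epsilon>^2) + 2 / (3 * \<epsilon>)) * ln (2 / \<delta>)\<rceil> \<longrightarrow>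
        measure_pmf.prob (forest_samples E l)
          {phis. forest_matrix E $ i $ j - \<epsilon> \<le> omega_bar E l phis i j \<and>
                 omega_bar E l phis i j \<le> forest_matrix E $ i $ j + \<epsilon>} \<ge> 1 - \<delta>)
   \<and>
     (\<forall>i l.
        l = nat \<lceil>(2 / (3 * \<epsilon>) + 1 / (4 * \<epsilon>^2)) * ln (2 / \<delta>)\<rceil> \<longrightarrow>
        measure_pmf.prob (forest_samples E l)
          {phis. (1 - \<epsilon>) * forest_matrix E $ i $ i \<le> omega_bar E l phis i i \<and>
                 omega_bar E l phis i i \<le> (1 + \<epsilon>) * forest_matrix E $ i $ i} \<ge> 1 - \<delta>)"
  using omega_bar_offdiag_concentration[OF simple eps(1) del] omega_bar_diag_concentration[OF eps(1) del]
  by blast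

end
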